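(* Let $\mathcal N=(P,T,F,In,\Upsilon)$ be a safe Petri net with transits and let $\varphi$ be a Flow-LTL formula containing $n\in\mathbb N$ flow subformulas $\mathbb A\,\psi_1,\dots,\mathbb A\,\psi_n$. Then the P/T Petri net with inhibitor arcs $\mathcal N^{>}$ constructed from $\mathcal N$ and $\varphi$ (as described in the context) has $O(|\mathcal N|\cdot n+|\mathcal N|)$ places and $O(|\mathcal N|^3\cdot n+|\mathcal N|)$ transitions.
   Context: A safe Petri net with transits is $\mathcal N=(P,T,F,In,\Upsilon)$ where $(P,T,F,In)$ is a safe Petri net (places $P$, transitions $T$, flow relation $F\subseteq(P\times T)\cup(T\times P)$, initial marking $In\subseteq P$; every reachable marking has at most one token per place) and, for each $t\in T$, $\Upsilon(t)\subseteq({}^\bullet t\cup\{\rhd\})\times t^\bullet$ is the transit relation of $t$ ($p\,\Upsilon(t)\,q$: the data flow in $p$ moves via $t$ to $q$; $\rhd\,\Upsilon(t)\,q$: a new data flow starts in $q$). $|\mathcal N|$ denotes the size of $\mathcal N$. A Flow-LTL formula is generated by $\varphi::=\psi\mid\varphi_1\wedge\varphi_2\mid\varphi_1\vee\varphi_2\mid\psi\to\varphi\mid\mathbb A\,\psi$ with $\psi$ an LTL formula over atomic propositions $P\cup T$; subformulas $\mathbb A\,\psi$ are flow subformulas. An inhibitor arc from place $p$ to transition $t$ enables $t$ only if $p$ is empty. Construction of $\mathcal N^{>}=(P^{>},T^{>},F^{>},F_I^{>},In^{>})$ with labelling $\lambda$ to $P\cup T$: (o) it contains all places, transitions and flow arcs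 of $\mathcal N$ (labelled by themselves) plus a fresh place $act_o$. For each $i\in\{1,\dots,n\}$: (s1) a copy $p_i$ of every $p\in P$ (labelled $p$); (s2) a place $\iota_i$; (a) an activation place $act_{t,i}$ for each $t\in T$; (s3) for each $t\in T$ and each $(\rhd,q)\in\Upsilon(t)$ a transition labelled $t$ with arcs $\iota_i\to$ it $\to q_i$; (s4) for each $t\in T$ and each $(p,q)\in\Upsilon(t)$ a transition labelled $t$ with arcs $p_i\to$ it $\to q_i$; (s5) for each $t\in T$ a skip transition $t_{skip_i}$ labelled $t$ with an inhibitor arc from $p_i$ for every $p\in{}^\bullet t$. Activation: (mO) each original $t\in T$ has arcs $act_o\to t\to act_{t,1}$; (mSi) each transition of subnet $i<n$ labelled $t$ has arcs $act_{t,i}\to$ it $\to act_{t,i+1}$; (mSn) each transition of subnet $n$ labelled $t$ has arcs $act_{t,n}\to$ it $\to act_o$. Initial marking: $In^{>}=\{act_o\}\cup\{\iota_i\mid 1\le i\le n\}\cup In$. The net consists of exactly these places, transitions and arcs. *)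

theory Defs
  imports Main
begin

text \<open>The start symbol of a transit is encoded as None; a transit (p,q) is (Some p, q).
  The flow relation F is split into its place-to-transition part and its
  transition-to-place part.\<close>

record ('p, 't) pnt =
  places :: "'p set"
  transs :: "'t set"
  flow_pt :: "('p \<times> 't) set"
  flow_tp :: "('t \<times> 'p) set"
  initm :: "'p set"
  transit :: "'t \<Rightarrow> ('p option \<times> 'p) set"

definition preset :: "('p, 't) pnt \<Rightarrow> 't \<Rightarrow> 'p set" where
  "preset N t = {p. (p, t) \<in> flow_pt N}"

definition postset :: "('p, 't) pnt \<Rightarrow> 't \<Rightarrow> 'p set" where
  "postset N t = {p. (t, p) \<in> flow_tp N}"

definition enabled :: "('p, 't) pnt \<Rightarrow> ('p \<Rightarrow> nat) \<Rightarrow> 't \<Rightarrow> bool" where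
  "enabled N M t \<longleftrightarrow> t \<in> transs N \<and> (\<forall>p \<in> preset N t. 1 \<le> M p)"

definition fire :: "('p, 't) pnt \<Rightarrow> ('p \<Rightarrow> nat) \<Rightarrow> 't \<Rightarrow> ('p \<Rightarrow> nat)" where
  "fire N M t = (\<lambda>p. M p - (if p \<in> preset N t then 1 else 0)
                        + (if p \<in> postset N t then 1 else 0))"

inductive_set reachable :: "('p, 't) pnt \<Rightarrow> ('p \<Rightarrow> nat) set" for N where
  init: "(\<lambda>p. if p \<in> initm N then 1 else 0) \<in> reachable N"
| step: "M \<in> reachable N \<Longrightarrow> enabled N M t \<Longrightarrow> fire N M t \<in> reachable N"

definition safe_pnt :: "('p, 't) pnt \<Rightarrow> bool" where
  "safe_pnt N \<longleftrightarrow>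
     finite (places N) \<and> finite (transs N) \<and>
     flow_pt N \<subseteq> places N \<times> transs N \<and> flow_tp N \<subseteq> transs N \<times> places N \<and>
     initm N \<subseteq> places N \<and>
     (\<forall>t \<in> transs N. transit N t \<subseteq> (Some ` preset N t \<union> {None}) \<times> postset N t) \<and>
     (\<forall>M \<in> reachable N. \<forall>p. M p \<le> 1)"

definition net_size :: "('p, 't) pnt \<Rightarrow> nat" where
  "net_size N = card (places N) + card (transs N)"

datatype ('p, 't) ltl =
    LAP "'p + 't"
  | LTrue
  | LNot "('p, 't) ltl"
  | LAnd "('p, 't) ltl" "('p, 't) ltl"
  | LOr "('p, 't) ltl" "('p, 't) ltl"
  | LNext "('p, 't) ltl"
  | LUntil "('p, 't) ltl" "('p, 't) ltl"
  | LEventually "('p, 't) ltl"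
  | LGlobally "('p, 't) ltl"

datatype ('p, 't) flowltl =
    FLTL "('p, 't) ltl"
  | FAnd "('p, 't) flowltl" "('p, 't) flowltl"
  | FOr "('p, 't) flowltl" "('p, 't) flowltl"
  | FImp "('p, 't) ltl" "('p, 't) flowltl"
  | FA "('p, 't) ltl"

fun num_flow :: "('p, 't) flowltl \<Rightarrow> nat" where
  "num_flow (FLTL \<psi>) = 0"
| "num_flow (FAnd a b) = num_flow a + num_flow b"
| "num_flow (FOr a b) = num_flow a + num_flow b"
| "num_flow (FImp \<psi> a) = num_flow a"
| "num_flow (FA \<psi>) = 1"

record ('q, 'u, 'p, 't) inet =
  iplaces :: "'q set"
  itranss :: "'u set"
  iflow_pt :: "('q \<times> 'u) set"
  iflow_tp :: "('u \<times> 'q) set"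
  inhib :: "('q \<times> 'u) set"
  iinit :: "'q set"
  plabel :: "'q \<Rightarrow> 'p"
  tlabel :: "'u \<Rightarrow> 't"

datatype ('p, 't) plc = PO 'p | ActO | PC 'p nat | Iota nat | Act 't nat
datatype ('p, 't) trn = TO 't | TS 't 'p nat | TM 't 'p 'p nat | TSkip 't nat

fun tlab :: "('p, 't) trn \<Rightarrow> 't" where
  "tlab (TO t) = t" | "tlab (TS t q i) = t" | "tlab (TM t p q i) = t" | "tlab (TSkip t i) = t"

fun tidx :: "('p, 't) trn \<Rightarrow> nat" where
  "tidx (TO t) = 0" | "tidx (TS t q i) = i" | "tidx (TM t p q i) = i" | "tidx (TSkip t i) = i"

fun plab :: "('p, 't) plc \<Rightarrow> 'p" where
  "plab (PO p) = p" | "plab (PC p i) = p" | "plab ActO = undefined"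
| "plab (Iota i) = undefined" | "plab (Act t i) = undefined"

definition sub_transs :: "('p, 't) pnt \<Rightarrow> nat \<Rightarrow> ('p, 't) trn set" where
  "sub_transs N n =
     {TS t q i | t q i. t \<in> transs N \<and> (None, q) \<in> transit N t \<and> i \<in> {1..n}} \<union>
     {TM t p q i | t p q i. t \<in> transs N \<and> (Some p, q) \<in> transit N t \<and> i \<in> {1..n}} \<union>
     {TSkip t i | t i. t \<in> transs N \<and> i \<in> {1..n}}"

definition construct_n :: "('p, 't) pnt \<Rightarrow> nat \<Rightarrow> (('p, 't) plc, ('p, 't) trn, 'p, 't) inet" where
  "construct_n N n = \<lparr>
     iplaces = PO ` places N \<union> {ActO} \<union> {PC p i | p i. p \<in> places N \<and> i \<in> {1..n}}
               \<union> Iota ` {1..n} \<union> {Act t i | t i. t \<in> transs N \<and> i \<in> {1..n}},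
     itranss = TO ` transs N \<union> sub_transs N n,
     iflow_pt = {(PO p, TO t) | p t. (p, t) \<in> flow_pt N}
               \<union> {(ActO, TO t) | t. t \<in> transs N}
               \<union> {(Iota i, TS t q i) | t q i. TS t q i \<in> sub_transs N n}
               \<union> {(PC p i, TM t p q i) | t p q i. TM t p q i \<in> sub_transs N n}
               \<union> {(Act (tlab u) (tidx u), u) | u. u \<in> sub_transs N n},
     iflow_tp = {(TO t, PO p) | t p. (t, p) \<in> flow_tp N}
               \<union> {(TO t, if n = 0 then ActO else Act t 1) | t. t \<in> transs N}
               \<union> {(TS t q i, PC q i) | t q i. TS t q i \<in> sub_transs N n}
               \<union> {(TM t p q i, PC q i) | t p q i. TM t p q i \<in> sub_transs N n}
               \<union> {(u, Act (tlab u) (Suc (tidx u))) | u. u \<in> sub_transs N n \<and> tidx u < n}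
               \<union> {(u, ActO) | u. u \<in> sub_transs N n \<and> tidx u = n},
     inhib = {(PC p i, TSkip t i) | p t i. t \<in> transs N \<and> p \<in> preset N t \<and> i \<in> {1..n}},
     iinit = {ActO} \<union> Iota ` {1..n} \<union> PO ` initm N,
     plabel = plab,
     tlabel = tlab \<rparr>"

definition construct :: "('p, 't) pnt \<Rightarrow> ('p, 't) flowltl \<Rightarrow> (('p, 't) plc, ('p, 't) trn, 'p, 't) inet" where
  "construct N \<phi> = construct_n N (num_flow \<phi>)"

end

theory Submission
  imports Defs
begin

(* Every place of the constructed net is an original place, the activation place, or
   indexed by an element of P \<times> {1..n}, {1..n} or T \<times> {1..n}; every transition is an
   original one or indexed by an element of T \<times> {1..n}, T \<times> P \<times> {1..n} or
   T \<times> P \<times> P \<times> {1..n}, the last two because transits only connect places of the net.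
   Counting these index sets bounds the places by (|N| + 1)(n + 1) and the transitions by
   |T| (1 + (1 + |P| + |P|^2) n) \<le> |N| + |N|^3 n. *)

lemma card_Un_le_add: "card A \<le> a \<Longrightarrow> card B \<le> b \<Longrightarrow> card (A \<union> B) \<le> a + b"
  using card_Un_le[of A B] by linarith

lemma safe_pnt_transit_subset:
  assumes "safe_pnt N" "t \<in> transs N"
  shows "transit N t \<subseteq> (Some ` places N \<union> {None}) \<times> places N"
  using assms unfolding safe_pnt_def preset_def postset_def by blast

lemma card_iplaces_construct_n_le:
  assumes fin: "finite (places N)" "finite (transs N)"
  shows "card (iplaces (construct_n N n)) \<le> (net_size N + 1) * (n + 1)"
proof -
  let ?P = "places N" and ?T = "transs N"
  have "iplaces (construct_n N n) = PO ` ?P \<union> {ActO} \<union> case_prod PC ` (?P \<times> {1..n})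
      \<union> Iota ` {1..n} \<union> case_prod Act ` (?T \<times> {1..n})"
    by (auto simp: construct_n_def)
  also have "card \<dots> \<le> card ?P + 1 + card ?P * n + n + card ?T * n"
  proof (intro card_Un_le_add)
    show "card (PO ` ?P) \<le> card ?P"
      using fin(1) by (rule card_image_le)
    show "card (case_prod PC ` (?P \<times> {1..n})) \<le> card ?P * n"
      using fin card_image_le[of "?P \<times> {1..n}" "case_prod PC"] by (simp add: card_cartesian_product)
    show "card (Iota ` {1..n}) \<le> n"
      using card_image_le[of "{1..n}" Iota] by simp
    show "card (case_prod Act ` (?T \<times> {1..n})) \<le> card ?T * n"
      using fin card_image_le[of "?T \<times> {1..n}" "case_prod Act"] by (simp add: card_cartesian_product)
  qed simp
  also have "\<dots> \<le> (net_size N + 1) * (n + 1)"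
    by (simp add: net_size_def algebra_simps)
  finally show ?thesis .
qed

lemma itranss_construct_n_subset:
  assumes transit: "\<And>t. t \<in> transs N \<Longrightarrow> transit N t \<subseteq> (Some ` places N \<union> {None}) \<times> places N"
  shows "itranss (construct_n N n) \<subseteq> TO ` transs N
      \<union> (\<lambda>(t, q, i). TS t q i) ` (transs N \<times> places N \<times> {1..n})
      \<union> (\<lambda>(t, p, q, i). TM t p q i) ` (transs N \<times> places N \<times> places N \<times> {1..n})
      \<union> case_prod TSkip ` (transs N \<times> {1..n})" (is "_ \<subseteq> ?R")
proof
  fix u assume "u \<in> itranss (construct_n N n)"
  then consider (orig) t where "t \<in> transs N" "u = TO t"
    | (start) t q i where "t \<in> transs N" "(None, q) \<in> transit N t" "i \<in> {1..n}" "u = TS t q i"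
    | (move) t p q i where "t \<in> transs N" "(Some p, q) \<in> transit N t" "i \<in> {1..n}" "u = TM t p q i"
    | (skip) t i where "t \<in> transs N" "i \<in> {1..n}" "u = TSkip t i"
    by (auto simp: construct_n_def sub_transs_def)
  then show "u \<in> ?R"
  proof cases
    case start
    then show ?thesis
      using transit[OF start(1)] by (auto intro!: image_eqI[of _ _ "(t, q, i)"])
  next
    case move
    then show ?thesis
      using transit[OF move(1)] by (auto intro!: image_eqI[of _ _ "(t, p, q, i)"])
  qed auto
qed

lemma card_itranss_construct_n_le:
  assumes fin: "finite (places N)" "finite (transs N)"
    and transit: "\<And>t. t \<in> transs N \<Longrightarrow> transit N t \<subseteq> (Some ` places N \<union> {None}) \<times> places N"
  shows "card (itranss (construct_n N n))
    \<le> card (transs N) * (1 + (1 + card (places N) + card (places N) ^ 2) * n)"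
proof -
  let ?P = "places N" and ?T = "transs N"
  have "card (itranss (construct_n N n)) \<le> card (TO ` ?T
      \<union> (\<lambda>(t, q, i). TS t q i) ` (?T \<times> ?P \<times> {1..n})
      \<union> (\<lambda>(t, p, q, i). TM t p q i) ` (?T \<times> ?P \<times> ?P \<times> {1..n})
      \<union> case_prod TSkip ` (?T \<times> {1..n}))"
    using fin by (intro card_mono itranss_construct_n_subset transit) auto
  also have "\<dots> \<le> card ?T + card ?T * (card ?P * n) + card ?T * (card ?P * (card ?P * n))
      + card ?T * n"
    using fin by (intro card_Un_le_add card_image_le[THEN order_trans])
      (auto simp: card_cartesian_product)
  also have "\<dots> = card ?T * (1 + (1 + card ?P + card ?P ^ 2) * n)"
    by (simp add: algebra_simps power2_eq_square)
  finally show ?thesis .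
qed

lemma mult_one_plus_plus_square_le_cube:
  fixes p t :: nat
  shows "t * (1 + p + p ^ 2) \<le> (p + t) ^ 3"
proof (cases "t = 0")
  case False
  have "1 + p + p ^ 2 \<le> (p + 1) ^ 2"
    by (simp add: power2_eq_square)
  also have "\<dots> \<le> (p + t) ^ 2"
    using False by (intro power_mono) auto
  finally have "t * (1 + p + p ^ 2) \<le> (p + t) * (p + t) ^ 2"
    by (intro mult_mono) auto
  then show ?thesis
    by (simp add: power_Suc[symmetric] numeral_3_eq_3)
qed simp

theorem lemma1:
  "\<exists>c :: nat. \<forall>(N :: ('p, 't) pnt) (\<phi> :: ('p, 't) flowltl).
     safe_pnt N \<and> net_size N > 0 \<longrightarrow>
       card (iplaces (construct N \<phi>))
         \<le> c * (net_size N * num_flow \<phi> + net_size N) \<and>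
       card (itranss (construct N \<phi>))
         \<le> c * (net_size N ^ 3 * num_flow \<phi> + net_size N)"
proof (intro exI[of _ 2] allI impI conjI; elim conjE)
  fix N :: "('p, 't) pnt" and \<phi> :: "('p, 't) flowltl"
  assume safe: "safe_pnt N" and pos: "net_size N > 0"
  let ?s = "net_size N" and ?n = "num_flow \<phi>" and ?P = "card (places N)" and ?T = "card (transs N)"
  have fin: "finite (places N)" "finite (transs N)"
    using safe by (auto simp: safe_pnt_def)
  have "?n \<le> ?s * ?n"
    using pos by simp
  have "card (iplaces (construct N \<phi>)) \<le> (?s + 1) * (?n + 1)"
    unfolding construct_def using fin by (rule card_iplaces_construct_n_le)
  also have "\<dots> = ?s * ?n + ?s + ?n + 1"
    by (simp add: algebra_simps)
  also have "\<dots> \<le> 2 * (?s * ?n + ?s)"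
    using pos \<open>?n \<le> ?s * ?n\<close> by arith
  finally show "card (iplaces (construct N \<phi>)) \<le> 2 * (?s * ?n + ?s)" .
  have "card (itranss (construct N \<phi>)) \<le> ?T * (1 + (1 + ?P + ?P ^ 2) * ?n)"
    unfolding construct_def using fin safe_pnt_transit_subset[OF safe]
    by (rule card_itranss_construct_n_le)
  also have "\<dots> = ?T + ?T * (1 + ?P + ?P ^ 2) * ?n"
    by (simp add: algebra_simps)
  also have "\<dots> \<le> ?s + ?s ^ 3 * ?n"
    unfolding net_size_def using mult_one_plus_plus_square_le_cube[where p = ?P and t = ?T]
    by (intro add_mono mult_le_mono1) auto
  also have "\<dots> \<le> 2 * (?s ^ 3 * ?n + ?s)"
    by simp
  finally show "card (itranss (construct N \<phi>)) \<le> 2 * (?s ^ 3 * ?n + ?s)" .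
qed

end
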